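(* Let $d_1,\dots,d_n$ be positive integers with $d=\sum_id_i\ge2$, and let $(p_1,p_2)$ be either $(s,0)$ with $s\in[0,1]$ or $(1,s)$ with $s\in(0,1]$. Then the unique pair $(\lambda,y)\in\mathbb{R}\times C^2([0,1];\mathbb{R}^n)$ satisfying $$p_1\sum_{i=1}^nd_i\Big(-y_i'\sum_{k=1}^nd_ky_k'+y_i'^2\Big)\Big|_{r=0}=(d-1)\lambda,$$ $$-p_2\,y_i'\sum_{k=1}^nd_ky_k'-y_i''=p_2\lambda\ \text{ on }[0,1]\ (i=1,\dots,n),\qquad y(0)=0,\quad y(1)=0,$$ is $(\lambda,y)=(0,0)$.
   Context: This is the system obtained, for parameters $t\in[0,1/2]$, from a homotopy with $p_1(t)=\min(\max(4t,0),1)$, $p_2(t)=\min(\max(4t-1,0),1)$, $p_3=p_4=0$; the pairs $(p_1(t),p_2(t))$ for $t\in[0,1/2]$ are exactly those listed. *)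

theory Defs
  imports Complex_Main
begin

definition C2_on01 :: "(real \<Rightarrow> real) \<Rightarrow> (real \<Rightarrow> real) \<Rightarrow> (real \<Rightarrow> real) \<Rightarrow> bool" where
  "C2_on01 u u1 u2 \<longleftrightarrow>
     (\<forall>r\<in>{0..1}. (u has_real_derivative u1 r) (at r within {0..1})) \<and>
     (\<forall>r\<in>{0..1}. (u1 has_real_derivative u2 r) (at r within {0..1})) \<and>
     continuous_on {0..1} u2"

text \<open>(lam, y) solves the boundary value problem; y = (y_0, ..., y_{n-1}),
  components indexed by i < n, y i r is the value of the i-th component at r.\<close>
definition is_solution ::
  "nat \<Rightarrow> (nat \<Rightarrow> nat) \<Rightarrow> real \<Rightarrow> real \<Rightarrow> real \<Rightarrow> (nat \<Rightarrow> real \<Rightarrow> real) \<Rightarrow> bool" where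
  "is_solution n d p1 p2 lam y \<longleftrightarrow>
     (\<exists>y1 y2.
        (\<forall>i<n. C2_on01 (y i) (y1 i) (y2 i)) \<and>
        p1 * (\<Sum>i<n. real (d i) *
                 (- y1 i 0 * (\<Sum>k<n. real (d k) * y1 k 0) + (y1 i 0)\<^sup>2))
          = (real (\<Sum>i<n. d i) - 1) * lam \<and>
        (\<forall>i<n. \<forall>r\<in>{0..1}.
           - p2 * y1 i r * (\<Sum>k<n. real (d k) * y1 k r) - y2 i r = p2 * lam) \<and>
        (\<forall>i<n. y i 0 = 0 \<and> y i 1 = 0))"

end

theory Submission
  imports Defs "HOL-Analysis.Analysis"
begin

text \<open>If \<open>p\<^sub>2 = 0\<close> every \<open>y\<^sub>i\<close> is affine, hence zero by the boundary
  conditions. If \<open>p\<^sub>1 = 1\<close>, the difference \<open>v = y\<^sub>i' - y\<^sub>j'\<close> solves the linear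
  equation \<open>v' = -p\<^sub>2 w v\<close> with \<open>w = \<Sum>\<^sub>k d\<^sub>k y\<^sub>k'\<close>, and by Rolle \<open>v\<close> vanishes
  somewhere, so \<open>v = 0\<close>: all \<open>y\<^sub>i'\<close> equal one function \<open>u\<close>. The condition at
  \<open>r = 0\<close> then gives \<open>\<lambda> = -D u(0)\<^sup>2\<close> with \<open>D = \<Sum>\<^sub>i d\<^sub>i\<close>, so
  \<open>u' = -p\<^sub>2 D (u + u(0)) (u - u(0))\<close> is again linear in \<open>u - u(0)\<close>, which forces
  \<open>u\<close> to be constant and hence zero. In both cases the condition at \<open>r = 0\<close>
  finally yields \<open>(D - 1) \<lambda> = 0\<close>.\<close>

lemma has_real_derivative_zero_imp_eq:
  assumes "convex S" "\<And>t. t \<in> S \<Longrightarrow> (f has_real_derivative 0) (at t within S)"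
    and "x \<in> S" "z \<in> S"
  shows "f x = f z"
  using has_field_derivative_zero_constant[OF assms(1,2)] assms(3,4) by metis

lemma has_real_derivative_const_imp_affine:
  assumes "\<And>t. t \<in> {a..b} \<Longrightarrow> (f has_real_derivative c) (at t within {a..b})"
    and "x \<in> {a..b}"
  shows "f x = f a + c * (x - a)"
proof -
  have "(\<lambda>t. f t - c * t) x = (\<lambda>t. f t - c * t) a"
  proof (rule has_real_derivative_zero_imp_eq[of "{a..b}" "\<lambda>t. f t - c * t"])
    fix t :: real assume "t \<in> {a..b}"
    then show "((\<lambda>t. f t - c * t) has_real_derivative 0) (at t within {a..b})"
      using DERIV_diff[OF assms(1) DERIV_cmult[OF DERIV_ident, of c]] by simp
  qed (use assms(2) in auto)
  then show ?thesis by (simp add: algebra_simps)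
qed

lemma Rolle_within_Icc:
  fixes f :: "real \<Rightarrow> real"
  assumes "a < b" "f a = f b"
    and "\<And>t. t \<in> {a..b} \<Longrightarrow> (f has_real_derivative f' t) (at t within {a..b})"
  shows "\<exists>z\<in>{a<..<b}. f' z = 0"
proof -
  have "\<exists>z. a < z \<and> z < b \<and> (\<lambda>v. f' z * v) = (\<lambda>v. 0)"
  proof (rule Rolle_deriv[OF assms(1,2) DERIV_continuous_on[OF assms(3)]])
    fix t assume "a < t" "t < b"
    then show "(f has_derivative (\<lambda>v. f' t * v)) (at t)"
      using assms(3)[of t] at_within_Icc_at[of a t b] by (simp add: has_field_derivative_def)
  qed
  then obtain z where "a < z" "z < b" and z: "(\<lambda>v. f' z * v) = (\<lambda>v. 0)" by blast
  moreover have "f' z = 0" using fun_cong[OF z, of 1] by simp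
  ultimately show ?thesis by auto
qed

lemma linear_ode_integrating_factor:
  fixes v A a :: "real \<Rightarrow> real"
  assumes "convex S"
    and v': "\<And>t. t \<in> S \<Longrightarrow> (v has_real_derivative - a t * v t) (at t within S)"
    and A': "\<And>t. t \<in> S \<Longrightarrow> (A has_real_derivative a t) (at t within S)"
    and "x \<in> S" "z \<in> S"
  shows "v x * exp (A x) = v z * exp (A z)"
proof (rule has_real_derivative_zero_imp_eq[OF assms(1) _ assms(4,5)])
  fix t assume "t \<in> S"
  show "((\<lambda>t. v t * exp (A t)) has_real_derivative 0) (at t within S)"
    by (rule derivative_eq_intros v'[OF \<open>t \<in> S\<close>] A'[OF \<open>t \<in> S\<close>] | simp)+
qed

corollary linear_ode_vanishes:
  fixes v A a :: "real \<Rightarrow> real"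
  assumes "convex S"
    and "\<And>t. t \<in> S \<Longrightarrow> (v has_real_derivative - a t * v t) (at t within S)"
    and "\<And>t. t \<in> S \<Longrightarrow> (A has_real_derivative a t) (at t within S)"
    and "z \<in> S" "v z = 0" "x \<in> S"
  shows "v x = 0"
  using linear_ode_integrating_factor[OF assms(1-3,6,4)] assms(5) by simp

locale bvp_solution =
  fixes n :: nat and d :: "nat \<Rightarrow> nat" and p2 lam :: real
    and y y1 y2 :: "nat \<Rightarrow> real \<Rightarrow> real"
  assumes C2: "\<And>i. i < n \<Longrightarrow> C2_on01 (y i) (y1 i) (y2 i)"
    and ode: "\<And>i r. i < n \<Longrightarrow> r \<in> {0..1} \<Longrightarrow>
      - p2 * y1 i r * (\<Sum>k<n. real (d k) * y1 k r) - y2 i r = p2 * lam"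
    and y_at_0: "\<And>i. i < n \<Longrightarrow> y i 0 = 0"
    and y_at_1: "\<And>i. i < n \<Longrightarrow> y i 1 = 0"
begin

lemma y_deriv: "i < n \<Longrightarrow> r \<in> {0..1} \<Longrightarrow> (y i has_real_derivative y1 i r) (at r within {0..1})"
  using C2 unfolding C2_on01_def by blast

lemma y1_deriv: "i < n \<Longrightarrow> r \<in> {0..1} \<Longrightarrow> (y1 i has_real_derivative y2 i r) (at r within {0..1})"
  using C2 unfolding C2_on01_def by blast

lemma y1_const_eq_0:
  assumes "i < n" "\<And>t. t \<in> {0..1} \<Longrightarrow> y1 i t = c"
  shows "c = 0"
proof -
  have "y i 1 = y i 0 + c * (1 - 0)"
    by (rule has_real_derivative_const_imp_affine) (use y_deriv assms in auto)
  then show ?thesis using y_at_0 y_at_1 assms(1) by simp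
qed

lemma y_eq_0_if_y1_eq_0:
  assumes "i < n" "\<And>t. t \<in> {0..1} \<Longrightarrow> y1 i t = 0" "r \<in> {0..1}"
  shows "y i r = 0"
proof -
  have "y i r = y i 0 + 0 * (r - 0)"
    by (rule has_real_derivative_const_imp_affine) (use y_deriv[OF assms(1)] assms(2,3) in force)+
  then show ?thesis using y_at_0 assms(1) by simp
qed

lemma y1_eq_0_if_p2_eq_0:
  assumes "p2 = 0" "i < n" "r \<in> {0..1}"
  shows "y1 i r = 0"
proof -
  have y1_const: "y1 i t = y1 i 0" if "t \<in> {0..1}" for t
  proof (rule has_real_derivative_zero_imp_eq[of "{0..1}" "y1 i"])
    fix s :: real assume "s \<in> {0..1}"
    then show "(y1 i has_real_derivative 0) (at s within {0..1})"
      using y1_deriv[OF assms(2)] ode[OF assms(2)] assms(1) by force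
  qed (use that in auto)
  have "y1 i 0 = 0" by (rule y1_const_eq_0[OF assms(2) y1_const])
  then show ?thesis using y1_const[OF assms(3)] by simp
qed

definition weighted_y :: "real \<Rightarrow> real" where
  "weighted_y r = (\<Sum>k<n. real (d k) * y k r)"

definition weighted_y1 :: "real \<Rightarrow> real" where
  "weighted_y1 r = (\<Sum>k<n. real (d k) * y1 k r)"

lemma weighted_y_deriv:
  "r \<in> {0..1} \<Longrightarrow> (weighted_y has_real_derivative weighted_y1 r) (at r within {0..1})"
  unfolding weighted_y_def weighted_y1_def
  by (intro DERIV_sum DERIV_cmult y_deriv) auto

lemma y1_eq:
  assumes "i < n" "j < n" "r \<in> {0..1}"
  shows "y1 i r = y1 j r"
proof -
  have "\<exists>z\<in>{0<..<1}. y1 i z - y1 j z = 0"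
    by (rule Rolle_within_Icc[of 0 1 "\<lambda>t. y i t - y j t"])
       (use assms y_at_0 y_at_1 in \<open>auto intro!: DERIV_diff y_deriv\<close>)
  then obtain z where "z \<in> {0<..<1}" "y1 i z - y1 j z = 0" by blast
  then have z: "z \<in> {0..1}" "y1 i z - y1 j z = 0" by auto
  have "(\<lambda>t. y1 i t - y1 j t) r = 0"
  proof (rule linear_ode_vanishes[of "{0..1}" "\<lambda>t. y1 i t - y1 j t" "\<lambda>t. p2 * weighted_y1 t"
        "\<lambda>t. p2 * weighted_y t", OF _ _ _ z])
    fix t :: real assume t: "t \<in> {0..1}"
    have "y2 i t - y2 j t = - (p2 * weighted_y1 t) * (y1 i t - y1 j t)"
      using ode[OF assms(1) t] ode[OF assms(2) t] unfolding weighted_y1_def by algebra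
    then show "((\<lambda>t. y1 i t - y1 j t) has_real_derivative
        - (p2 * weighted_y1 t) * (y1 i t - y1 j t)) (at t within {0..1})"
      using DERIV_diff[OF y1_deriv[OF assms(1) t] y1_deriv[OF assms(2) t]] by simp
    show "((\<lambda>t. p2 * weighted_y t) has_real_derivative p2 * weighted_y1 t) (at t within {0..1})"
      by (intro DERIV_cmult weighted_y_deriv t)
  qed (use assms(3) in auto)
  then show ?thesis by simp
qed

lemma weighted_y1_eq:
  assumes "r \<in> {0..1}"
  shows "weighted_y1 r = real (\<Sum>k<n. d k) * y1 0 r"
proof -
  have "weighted_y1 r = (\<Sum>k<n. real (d k) * y1 0 r)"
    unfolding weighted_y1_def
  proof (intro sum.cong refl)
    fix k assume "k \<in> {..<n}"
    then have "y1 k r = y1 0 r" using assms by (intro y1_eq) auto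
    then show "real (d k) * y1 k r = real (d k) * y1 0 r" by simp
  qed
  then show ?thesis unfolding of_nat_sum sum_distrib_right .
qed

context
  assumes total_weight: "(\<Sum>i<n. d i) \<noteq> 1"
    and y1_at_0: "(\<Sum>i<n. real (d i) *
        (- y1 i 0 * (\<Sum>k<n. real (d k) * y1 k 0) + (y1 i 0)\<^sup>2)) = (real (\<Sum>i<n. d i) - 1) * lam"
begin

lemma lam_eq: "lam = - real (\<Sum>i<n. d i) * (y1 0 0)\<^sup>2"
proof -
  define D where "D = real (\<Sum>i<n. d i)"
  define u0 where "u0 = y1 0 0"
  have "(D - 1) * lam = (\<Sum>i<n. real (d i) * (- y1 i 0 * weighted_y1 0 + (y1 i 0)\<^sup>2))"
    using y1_at_0 unfolding weighted_y1_def D_def by simp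
  also have "\<dots> = (\<Sum>i<n. real (d i) * (- u0 * (D * u0) + u0\<^sup>2))"
  proof (intro sum.cong refl)
    fix i assume "i \<in> {..<n}"
    then have "y1 i 0 = u0" unfolding u0_def by (intro y1_eq) auto
    then show "real (d i) * (- y1 i 0 * weighted_y1 0 + (y1 i 0)\<^sup>2)
        = real (d i) * (- u0 * (D * u0) + u0\<^sup>2)"
      using weighted_y1_eq[of 0, folded u0_def D_def] by simp
  qed
  also have "\<dots> = D * (- u0 * (D * u0) + u0\<^sup>2)"
    unfolding D_def of_nat_sum sum_distrib_right ..
  finally have "(D - 1) * (lam + D * u0\<^sup>2) = 0" by algebra
  moreover have "D \<noteq> 1" using total_weight unfolding D_def by linarith
  ultimately show ?thesis unfolding D_def u0_def by simp
qed

lemma y1_eq_0_if_coupled: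
  assumes "i < n" "r \<in> {0..1}"
  shows "y1 i r = 0"
proof -
  define D where "D = real (\<Sum>i<n. d i)"
  define u0 where "u0 = y1 0 0"
  have n: "0 < n" using assms(1) by simp
  \<comment> \<open>Since \<open>\<lambda> = -D u0\<^sup>2\<close>, \<open>u = y1 0\<close> solves \<open>u' = -p2 D (u + u0) (u - u0)\<close>.\<close>
  have lam: "lam = - D * u0\<^sup>2" using lam_eq unfolding D_def u0_def .
  have u_const: "(\<lambda>t. y1 0 t - u0) t = 0" if "t \<in> {0..1}" for t
  proof (rule linear_ode_vanishes[of "{0..1}" "\<lambda>t. y1 0 t - u0" "\<lambda>t. p2 * D * (y1 0 t + u0)"
        "\<lambda>t. p2 * D * (y 0 t + u0 * t)" 0, OF _ _ _ _ _ that])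
    fix t :: real assume t: "t \<in> {0..1}"
    have "(\<Sum>k<n. real (d k) * y1 k t) = D * y1 0 t"
      using weighted_y1_eq[OF t] unfolding weighted_y1_def D_def .
    then have "- p2 * y1 0 t * (D * y1 0 t) - y2 0 t = p2 * (- D * u0\<^sup>2)"
      using ode[OF n t] unfolding lam by simp
    then have "y2 0 t = - (p2 * D * (y1 0 t + u0)) * (y1 0 t - u0)" by algebra
    then show "((\<lambda>t. y1 0 t - u0) has_real_derivative
        - (p2 * D * (y1 0 t + u0)) * (y1 0 t - u0)) (at t within {0..1})"
      using DERIV_diff[OF y1_deriv[OF n t] DERIV_const] by simp
    show "((\<lambda>t. p2 * D * (y 0 t + u0 * t)) has_real_derivative p2 * D * (y1 0 t + u0))
        (at t within {0..1})"
      using DERIV_cmult[OF DERIV_add[OF y_deriv[OF n t] DERIV_cmult[OF DERIV_ident]], of "p2 * D" u0]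
      by simp
  qed (auto simp: u0_def)
  have "u0 = 0"
    by (rule y1_const_eq_0[OF n]) (use u_const in simp)
  then show ?thesis using u_const[OF assms(2)] y1_eq[OF assms(1) n assms(2)] by simp
qed

end

lemma lam_eq_0_and_y_eq_0:
  assumes "p2 = 0 \<or> p1 = 1" "(\<Sum>i<n. d i) \<ge> 2"
    and y1_at_0: "p1 * (\<Sum>i<n. real (d i) *
        (- y1 i 0 * (\<Sum>k<n. real (d k) * y1 k 0) + (y1 i 0)\<^sup>2)) = (real (\<Sum>i<n. d i) - 1) * lam"
  shows "lam = 0 \<and> (\<forall>i<n. \<forall>r\<in>{0..1}. y i r = 0)"
proof -
  have y1_0: "y1 i r = 0" if "i < n" "r \<in> {0..1}" for i r
    using assms(1)
  proof
    assume "p2 = 0"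
    then show ?thesis by (rule y1_eq_0_if_p2_eq_0[OF _ that])
  next
    assume "p1 = 1"
    have "(\<Sum>i<n. d i) \<noteq> 1" using assms(2) by linarith
    then show ?thesis by (rule y1_eq_0_if_coupled[OF _ _ that]) (use y1_at_0 \<open>p1 = 1\<close> in simp)
  qed
  then have "(real (\<Sum>i<n. d i) - 1) * lam = 0" using y1_at_0 by simp
  moreover have "real (\<Sum>i<n. d i) \<ge> 2" using assms(2) by linarith
  ultimately have "lam = 0" by simp
  moreover have "y i r = 0" if "i < n" "r \<in> {0..1}" for i r
    by (rule y_eq_0_if_y1_eq_0[OF that(1) y1_0[OF that(1)] that(2)])
  ultimately show ?thesis by blast
qed

end

lemma is_solution_if_vanishing:
  assumes "\<forall>i<n. \<forall>r\<in>{0..1}. y i r = 0"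
  shows "is_solution n d p1 p2 0 y"
proof -
  have "C2_on01 (y i) (\<lambda>r. 0) (\<lambda>r. 0)" if "i < n" for i
    unfolding C2_on01_def
  proof (intro conjI ballI)
    fix r :: real assume r: "r \<in> {0..1}"
    show "(y i has_real_derivative 0) (at r within {0..1})"
      by (rule has_field_derivative_transform_within[where f="\<lambda>_. 0" and d=1])
         (use assms that r in auto)
  qed auto
  then show ?thesis
    unfolding is_solution_def using assms
    by (intro exI[of _ "\<lambda>i r. 0"]) auto
qed

theorem lemma4p2:
  fixes n :: nat and d :: "nat \<Rightarrow> nat" and p1 p2 :: real
  assumes "\<forall>i<n. d i > 0"
    and "(\<Sum>i<n. d i) \<ge> 2"
    and "(\<exists>s\<in>{0..1}. p1 = s \<and> p2 = 0) \<or> (\<exists>s\<in>{0<..1}. p1 = 1 \<and> p2 = s)"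
  shows "\<forall>lam y. is_solution n d p1 p2 lam y \<longleftrightarrow>
           (lam = 0 \<and> (\<forall>i<n. \<forall>r\<in>{0..1}. y i r = 0))"
proof (intro allI iffI)
  fix lam :: real and y :: "nat \<Rightarrow> real \<Rightarrow> real"
  assume "is_solution n d p1 p2 lam y"
  then obtain y1 y2 where "\<forall>i<n. C2_on01 (y i) (y1 i) (y2 i)"
    and y1_at_0: "p1 * (\<Sum>i<n. real (d i) *
        (- y1 i 0 * (\<Sum>k<n. real (d k) * y1 k 0) + (y1 i 0)\<^sup>2)) = (real (\<Sum>i<n. d i) - 1) * lam"
    and "\<forall>i<n. \<forall>r\<in>{0..1}. - p2 * y1 i r * (\<Sum>k<n. real (d k) * y1 k r) - y2 i r = p2 * lam"
    and "\<forall>i<n. y i 0 = 0 \<and> y i 1 = 0"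
    unfolding is_solution_def by blast
  then interpret bvp_solution n d p2 lam y y1 y2 by unfold_locales auto
  show "lam = 0 \<and> (\<forall>i<n. \<forall>r\<in>{0..1}. y i r = 0)"
    using assms(2,3) y1_at_0 by (intro lam_eq_0_and_y_eq_0) auto
next
  fix lam :: real and y :: "nat \<Rightarrow> real \<Rightarrow> real"
  assume "lam = 0 \<and> (\<forall>i<n. \<forall>r\<in>{0..1}. y i r = 0)"
  then show "is_solution n d p1 p2 lam y" using is_solution_if_vanishing by blast
qed

end
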